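(* Let $(S,W)$ be the spherical Coxeter complex of type $D_n$ ($n\ge4$). Let $\lambda_i:=\frac{1}{\sqrt{2(n+1-i)}}$ for $i\neq2$ and $\lambda_2:=\lambda_1$. Let $\alpha\subset S$ be a root and let $v$ be a vertex of type $i$ in the interior of $\alpha$. Then $\sin d(v,\partial\alpha)\in\{\lambda_i,2\lambda_i\}$. Moreover, if $i=n$ then $\sin d(v,\partial\alpha)=\lambda_n$, and if $i\in\{1,2\}$ then $\sin d(v,\partial\alpha)=2\lambda_1=2\lambda_2$.
   Context: $S$ is the unit sphere in $\mathbb{R}^n$ with standard basis $e_1,\dots,e_n$, and $W$ is the Weyl group of $D_n$ (permutations of coordinates combined with an even number of sign changes), acting by reflections. Roots of $(S,W)$ are the closed hemispheres $\{x:\langle x,c\rangle\ge0\}$ with center $c=\frac{1}{\sqrt2}(\pm e_j\pm e_k)$, $j\ne k$; $\partial\alpha$ is the boundary great sphere of $\alpha$. Vertex types: a vertex is of type $i\neq 2$ if it lies in the $W$-orbit of $\frac{1}{\sqrt{n+1-i}}(e_i+e_{i+1}+\dots+e_n)$, and of type $2$ if it lies in the $W$-orbit of $\frac{1}{\sqrt n}(-e_1+e_2+\dots+e_n)$. The interior of $\alpha$ is $\alpha\setminus\partial\alpha$; $d$ is the spherical metric. *)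

theory Defs
  imports "HOL-Analysis.Analysis"
begin

text \<open>Points of R^n are represented as functions nat => real, with coordinates
indexed by 1..n and value 0 outside {1..n}.\<close>

definition vec_n :: "nat \<Rightarrow> (nat \<Rightarrow> real) set" where
  "vec_n n = {x. \<forall>k. k \<notin> {1..n} \<longrightarrow> x k = 0}"

definition ip :: "nat \<Rightarrow> (nat \<Rightarrow> real) \<Rightarrow> (nat \<Rightarrow> real) \<Rightarrow> real" where
  "ip n x y = (\<Sum>k\<in>{1..n}. x k * y k)"

definition sph :: "nat \<Rightarrow> (nat \<Rightarrow> real) set" where
  "sph n = {x \<in> vec_n n. ip n x x = 1}"

definition sdist :: "nat \<Rightarrow> (nat \<Rightarrow> real) \<Rightarrow> (nat \<Rightarrow> real) \<Rightarrow> real" where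
  "sdist n x y = arccos (ip n x y)"

definition sdist_set :: "nat \<Rightarrow> (nat \<Rightarrow> real) \<Rightarrow> (nat \<Rightarrow> real) set \<Rightarrow> real" where
  "sdist_set n x A = Inf (sdist n x ` A)"

definition ebas :: "nat \<Rightarrow> nat \<Rightarrow> real" where
  "ebas j = (\<lambda>k. if k = j then 1 else 0)"

definition weylD :: "nat \<Rightarrow> ((nat \<Rightarrow> real) \<Rightarrow> (nat \<Rightarrow> real)) set" where
  "weylD n = {(\<lambda>x k. if k \<in> {1..n} then s k * x (\<sigma> k) else 0) | \<sigma> s.
     \<sigma> permutes {1..n} \<and> (\<forall>k\<in>{1..n}. s k = 1 \<or> s k = -1) \<and> (\<Prod>k\<in>{1..n}. s k) = 1}"

definition base_vertex :: "nat \<Rightarrow> nat \<Rightarrow> (nat \<Rightarrow> real)" where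
  "base_vertex n i =
     (if i = 2 then (\<lambda>k. if k = 1 then - 1 / sqrt (real n)
                         else if k \<in> {2..n} then 1 / sqrt (real n) else 0)
      else (\<lambda>k. if k \<in> {i..n} then 1 / sqrt (real (n + 1 - i)) else 0))"

definition vertex_of_type :: "nat \<Rightarrow> nat \<Rightarrow> (nat \<Rightarrow> real) \<Rightarrow> bool" where
  "vertex_of_type n i v \<longleftrightarrow> i \<in> {1..n} \<and> (\<exists>w\<in>weylD n. v = w (base_vertex n i))"

definition root_center :: "nat \<Rightarrow> (nat \<Rightarrow> real) \<Rightarrow> bool" where
  "root_center n c \<longleftrightarrow> (\<exists>j k a b. j \<in> {1..n} \<and> k \<in> {1..n} \<and> j \<noteq> k \<and>
      (a = 1 \<or> a = -1) \<and> (b = 1 \<or> b = (-1::real)) \<and>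
      c = (\<lambda>m. (a * ebas j m + b * ebas k m) / sqrt 2))"

definition hemisphere :: "nat \<Rightarrow> (nat \<Rightarrow> real) \<Rightarrow> (nat \<Rightarrow> real) set" where
  "hemisphere n c = {x \<in> sph n. ip n x c \<ge> 0}"

definition great_sphere :: "nat \<Rightarrow> (nat \<Rightarrow> real) \<Rightarrow> (nat \<Rightarrow> real) set" where
  "great_sphere n c = {x \<in> sph n. ip n x c = 0}"

definition lam :: "nat \<Rightarrow> nat \<Rightarrow> real" where
  "lam n i = (if i = 2 then 1 / sqrt (2 * real n) else 1 / sqrt (2 * real (n + 1 - i)))"

end

theory Submission
  imports Defs
begin

text \<open>The distance from a point \<open>v\<close> of the closed hemisphere with center \<open>c\<close> to its boundary
  great sphere is the complement of the angle between \<open>v\<close> and its projection to the boundary,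
  so its sine is \<open>\<langle>v, c\<rangle>\<close>. For a root center \<open>c = (\<pm>e\<^sub>j \<pm> e\<^sub>k)/\<surd>2\<close> this is
  \<open>(\<pm>v\<^sub>j \<pm> v\<^sub>k)/\<surd>2\<close>, and every coordinate of a vertex of type \<open>i\<close> is \<open>0\<close> or \<open>\<pm>\<surd>2 \<lambda>\<^sub>i\<close>;
  for types 1 and 2 no coordinate vanishes, and for type \<open>n\<close> only one does not.\<close>

lemma ip_commute: "ip n x y = ip n y x"
  unfolding ip_def by (simp add: mult.commute)

lemma ip_diff_scaled_left: "ip n (\<lambda>k. x k - s * y k) z = ip n x z - s * ip n y z"
  unfolding ip_def by (simp add: algebra_simps sum_subtractf sum_distrib_left)

lemma ip_divide_left: "ip n (\<lambda>k. x k / s) z = ip n x z / s"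
  unfolding ip_def by (simp add: sum_divide_distrib)

lemma ip_lincomb_divide_left:
  "ip n (\<lambda>m. (a * x m + b * y m) / s) z = (a * ip n x z + b * ip n y z) / s"
  unfolding ip_def
  by (simp add: algebra_simps sum.distrib sum_distrib_left flip: sum_divide_distrib)

lemma ip_self_diff_scaled:
  "ip n (\<lambda>k. x k - s * y k) (\<lambda>k. x k - s * y k) = ip n x x - 2 * s * ip n x y + s\<^sup>2 * ip n y y"
  unfolding ip_def
  by (simp add: algebra_simps sum.distrib sum_subtractf sum_distrib_left power2_eq_square)

lemma ip_self_nonneg: "0 \<le> ip n x x"
  unfolding ip_def by (auto intro: sum_nonneg)

lemma ip_ebas_left:
  assumes "l \<in> {1..n}"
  shows "ip n (ebas l) y = y l"
proof -
  have "ip n (ebas l) y = (\<Sum>k\<in>{1..n}. if k = l then y k else 0)"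
    unfolding ip_def ebas_def by (rule sum.cong) auto
  also have "\<dots> = y l" using assms by simp
  finally show ?thesis .
qed

lemma ip_square_le_unit:
  assumes "ip n x x = 1"
  shows "(ip n w x)\<^sup>2 \<le> ip n w w"
proof -
  have "0 \<le> ip n (\<lambda>k. w k - ip n w x * x k) (\<lambda>k. w k - ip n w x * x k)"
    by (rule ip_self_nonneg)
  also have "\<dots> = ip n w w - (ip n w x)\<^sup>2"
    unfolding ip_self_diff_scaled using assms by (simp add: power2_eq_square)
  finally show ?thesis by simp
qed

lemma ip_sph_square_le_1: "x \<in> sph n \<Longrightarrow> y \<in> sph n \<Longrightarrow> (ip n x y)\<^sup>2 \<le> 1"
  using ip_square_le_unit[of n y x] by (simp add: sph_def)

text \<open>\<open>v - \<langle>v, c\<rangle> c\<close> is orthogonal to \<open>c\<close> and has squared length \<open>1 - \<langle>v, c\<rangle>\<^sup>2\<close>; on the great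
  sphere \<open>c\<^sup>\<bottom>\<close> it has the same inner products as \<open>v\<close>.\<close>

lemma ip_self_orth_part:
  assumes "v \<in> sph n" "c \<in> sph n"
  shows "ip n (\<lambda>k. v k - ip n v c * c k) (\<lambda>k. v k - ip n v c * c k) = 1 - (ip n v c)\<^sup>2"
  using assms unfolding ip_self_diff_scaled by (simp add: sph_def power2_eq_square)

lemma great_sphere_ip_square_le:
  assumes v: "v \<in> sph n" and c: "c \<in> sph n" and x: "x \<in> great_sphere n c"
  shows "(ip n v x)\<^sup>2 \<le> 1 - (ip n v c)\<^sup>2"
proof -
  have xx: "ip n x x = 1" and xc: "ip n c x = 0"
    using x ip_commute[of n c x] by (auto simp: great_sphere_def sph_def)
  have "ip n (\<lambda>k. v k - ip n v c * c k) x = ip n v x"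
    unfolding ip_diff_scaled_left xc by simp
  with ip_square_le_unit[OF xx] show ?thesis
    by (metis ip_self_orth_part[OF v c])
qed

lemma great_sphere_ip_attains:
  assumes v: "v \<in> sph n" and c: "c \<in> sph n" and nonempty: "great_sphere n c \<noteq> {}"
  shows "\<exists>x\<in>great_sphere n c. ip n v x = sqrt (1 - (ip n v c)\<^sup>2)"
proof (cases "(ip n v c)\<^sup>2 < 1")
  case True
  define t where "t = ip n v c"
  define r where "r = sqrt (1 - t\<^sup>2)"
  define w where "w = (\<lambda>k. v k - t * c k)"
  define x where "x = (\<lambda>k. w k / r)"
  have r: "0 < r" "r\<^sup>2 = 1 - t\<^sup>2"
    using True unfolding r_def t_def by auto
  have ww: "ip n w w = r\<^sup>2" and wv: "ip n w v = r\<^sup>2"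
    using ip_self_orth_part[OF v c] v c r(2) ip_commute[of n c v]
    unfolding w_def t_def ip_diff_scaled_left by (auto simp: sph_def power2_eq_square)
  have "x \<in> vec_n n"
    using v c unfolding x_def w_def sph_def vec_n_def by auto
  moreover have "ip n x x = 1"
    using ww r(1) ip_commute[of n w x] unfolding x_def ip_divide_left
    by (simp add: power2_eq_square)
  moreover have "ip n x c = 0"
    using c unfolding x_def w_def t_def ip_divide_left ip_diff_scaled_left by (simp add: sph_def)
  moreover have "ip n v x = r"
    using wv r(1) ip_commute[of n v x] unfolding x_def ip_divide_left
    by (simp add: power2_eq_square)
  ultimately show ?thesis
    unfolding great_sphere_def sph_def r_def t_def by auto
next
  case False
  with ip_sph_square_le_1[OF v c] have "(ip n v c)\<^sup>2 = 1" by simp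
  moreover obtain x where "x \<in> great_sphere n c" using nonempty by auto
  ultimately show ?thesis
    using great_sphere_ip_square_le[OF v c] by force
qed

lemma sdist_set_great_sphere:
  assumes v: "v \<in> sph n" and c: "c \<in> sph n" and nonempty: "great_sphere n c \<noteq> {}"
  shows "sdist_set n v (great_sphere n c) = arccos (sqrt (1 - (ip n v c)\<^sup>2))"
  unfolding sdist_set_def
proof (rule cInf_eq_minimum)
  show "arccos (sqrt (1 - (ip n v c)\<^sup>2)) \<in> sdist n v ` great_sphere n c"
    using great_sphere_ip_attains[OF assms] unfolding sdist_def by force
next
  fix y assume "y \<in> sdist n v ` great_sphere n c"
  then obtain x where x: "x \<in> great_sphere n c" and y: "y = arccos (ip n v x)"
    unfolding sdist_def by auto
  have "x \<in> sph n" using x by (simp add: great_sphere_def)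
  then have "-1 \<le> ip n v x"
    using ip_sph_square_le_1[OF v] by (simp add: abs_square_le_1 abs_le_iff)
  moreover have "ip n v x \<le> sqrt (1 - (ip n v c)\<^sup>2)"
    using great_sphere_ip_square_le[OF v c x] by (rule real_le_rsqrt)
  moreover have "sqrt (1 - (ip n v c)\<^sup>2) \<le> 1" by simp
  ultimately show "arccos (sqrt (1 - (ip n v c)\<^sup>2)) \<le> y"
    unfolding y by (rule arccos_le_arccos)
qed

lemma sin_sdist_set_great_sphere:
  assumes "v \<in> sph n" "c \<in> sph n" "great_sphere n c \<noteq> {}" "0 \<le> ip n v c"
  shows "sin (sdist_set n v (great_sphere n c)) = ip n v c"
proof -
  have "(ip n v c)\<^sup>2 \<le> 1" by (rule ip_sph_square_le_1[OF assms(1,2)])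
  then have "sin (arccos (sqrt (1 - (ip n v c)\<^sup>2))) = sqrt (1 - (sqrt (1 - (ip n v c)\<^sup>2))\<^sup>2)"
    by (intro sin_arccos) (auto intro: order.trans[of _ 0])
  also have "\<dots> = \<bar>ip n v c\<bar>"
    using \<open>(ip n v c)\<^sup>2 \<le> 1\<close> by simp
  finally have "sin (arccos (sqrt (1 - (ip n v c)\<^sup>2))) = \<bar>ip n v c\<bar>" .
  with assms(4) show ?thesis by (simp add: sdist_set_great_sphere[OF assms(1-3)])
qed

lemma root_centerE:
  assumes "root_center n c"
  obtains j k a b where "j \<in> {1..n}" "k \<in> {1..n}" "j \<noteq> k" "\<bar>a\<bar> = 1" "\<bar>b\<bar> = 1"
    and "c = (\<lambda>m. (a * ebas j m + b * ebas k m) / sqrt 2)"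
    and "\<And>y. ip n y c = (a * y j + b * y k) / sqrt 2"
proof -
  obtain j k a b where jk: "j \<in> {1..n}" "k \<in> {1..n}" "j \<noteq> k"
    and ab: "a = 1 \<or> a = -1" "b = 1 \<or> b = (-1::real)"
    and c: "c = (\<lambda>m. (a * ebas j m + b * ebas k m) / sqrt 2)"
    using assms unfolding root_center_def by blast
  have "ip n y c = (a * y j + b * y k) / sqrt 2" for y
  proof -
    have "ip n y c = ip n c y" by (rule ip_commute)
    also have "\<dots> = (a * ip n (ebas j) y + b * ip n (ebas k) y) / sqrt 2"
      unfolding c by (rule ip_lincomb_divide_left)
    finally show ?thesis using jk by (simp add: ip_ebas_left)
  qed
  moreover have "\<bar>a\<bar> = 1" "\<bar>b\<bar> = 1" using ab by auto
  ultimately show ?thesis using jk c that by blast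
qed

lemma root_center_in_sph: "root_center n c \<Longrightarrow> c \<in> sph n"
proof (elim root_centerE)
  fix j k and a b :: real
  assume jk: "j \<in> {1..n}" "k \<in> {1..n}" "j \<noteq> k" and ab: "\<bar>a\<bar> = 1" "\<bar>b\<bar> = 1"
    and c: "c = (\<lambda>m. (a * ebas j m + b * ebas k m) / sqrt 2)"
    and ip_c: "\<And>y. ip n y c = (a * y j + b * y k) / sqrt 2"
  have "c \<in> vec_n n" using jk unfolding c vec_n_def ebas_def by auto
  moreover have "a * a = 1" "b * b = 1" using ab by (auto simp: abs_if split: if_splits)
  then have "ip n c c = 1" using jk unfolding ip_c by (simp add: c ebas_def field_simps)
  ultimately show "c \<in> sph n" by (simp add: sph_def)
qed

text \<open>A basis vector \<open>e\<^sub>l\<close> with \<open>l \<le> 3\<close> avoiding both indices of the root lies on \<open>\<partial>\<alpha>\<close>.\<close>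

lemma great_sphere_root_center_nonempty:
  assumes "3 \<le> n" "root_center n c"
  shows "great_sphere n c \<noteq> {}"
proof -
  obtain j k a b where ip_c: "\<And>y. ip n y c = (a * y j + b * y k) / sqrt 2"
    using root_centerE[OF assms(2)] by metis
  have "\<exists>l::nat. (l = 1 \<or> l = 2 \<or> l = 3) \<and> l \<noteq> j \<and> l \<noteq> k" by presburger
  then obtain l where l: "l \<in> {1, 2, 3}" "l \<noteq> j" "l \<noteq> k" by auto
  then have l_range: "l \<in> {1..n}" using assms(1) by auto
  have "ebas l \<in> vec_n n" using l_range by (auto simp: vec_n_def ebas_def)
  moreover have "ip n (ebas l) (ebas l) = 1"
    using ip_ebas_left[OF l_range, of "ebas l"] by (simp add: ebas_def)
  moreover have "ip n (ebas l) c = 0" using l by (simp add: ip_c ebas_def)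
  ultimately have "ebas l \<in> great_sphere n c" by (simp add: great_sphere_def sph_def)
  then show ?thesis by blast
qed

lemma abs_base_vertex_cases:
  assumes "i \<in> {1..n}" "p \<in> {1..n}"
  shows "\<bar>base_vertex n i p\<bar> = 0 \<or> \<bar>base_vertex n i p\<bar> = sqrt 2 * lam n i"
proof -
  define m where "m = (if i = 2 then real n else real (n + 1 - i))"
  have m: "0 < m" using assms by (auto simp: m_def)
  have "lam n i = 1 / sqrt (2 * m)" by (simp add: lam_def m_def)
  also have "\<dots> = 1 / (sqrt 2 * sqrt m)" by (simp add: real_sqrt_mult)
  finally have lam: "sqrt 2 * lam n i = 1 / sqrt m" by simp
  have "base_vertex n i p \<in> {0, 1 / sqrt m, - (1 / sqrt m)}"
    using assms unfolding base_vertex_def m_def by simp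
  then show ?thesis using m by (auto simp: lam)
qed

lemma base_vertex_nonzero: "i \<in> {1, 2} \<Longrightarrow> p \<in> {1..n} \<Longrightarrow> base_vertex n i p \<noteq> 0"
  unfolding base_vertex_def by auto

lemma base_vertex_last_nonzero:
  "n \<noteq> 2 \<Longrightarrow> p \<in> {1..n} \<Longrightarrow> base_vertex n n p \<noteq> 0 \<Longrightarrow> p = n"
  unfolding base_vertex_def by (auto split: if_splits)

lemma vertex_of_typeE:
  assumes "vertex_of_type n i v"
  obtains \<sigma> where "\<sigma> permutes {1..n}" "\<And>p. p \<in> {1..n} \<Longrightarrow> \<bar>v p\<bar> = \<bar>base_vertex n i (\<sigma> p)\<bar>"
proof -
  obtain \<sigma> s where "\<sigma> permutes {1..n}" and s: "\<forall>k\<in>{1..n}. s k = 1 \<or> s k = -1"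
    and v: "v = (\<lambda>k. if k \<in> {1..n} then s k * base_vertex n i (\<sigma> k) else 0)"
    using assms unfolding vertex_of_type_def weylD_def by blast
  moreover have "\<bar>v p\<bar> = \<bar>base_vertex n i (\<sigma> p)\<bar>" if "p \<in> {1..n}" for p
    using s[rule_format, OF that] that by (auto simp: v)
  ultimately show ?thesis using that by blast
qed

lemma lam_pos: "i \<in> {1..n} \<Longrightarrow> 0 < lam n i"
  unfolding lam_def by auto

lemma vertex_coordinate_cases:
  assumes "vertex_of_type n i v" "p \<in> {1..n}"
  shows "\<bar>v p\<bar> = 0 \<or> \<bar>v p\<bar> = sqrt 2 * lam n i"
proof -
  have "i \<in> {1..n}" using assms(1) by (simp add: vertex_of_type_def)
  obtain \<sigma> where "\<sigma> permutes {1..n}" "\<bar>v p\<bar> = \<bar>base_vertex n i (\<sigma> p)\<bar>"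
    using vertex_of_typeE[OF assms(1)] assms(2) by metis
  with abs_base_vertex_cases[OF \<open>i \<in> {1..n}\<close>] assms(2) show ?thesis
    by (metis permutes_in_image)
qed

lemma vertex_coordinate_nonzero:
  assumes "vertex_of_type n i v" "i \<in> {1, 2}" "p \<in> {1..n}"
  shows "v p \<noteq> 0"
proof -
  obtain \<sigma> where "\<sigma> permutes {1..n}" "\<bar>v p\<bar> = \<bar>base_vertex n i (\<sigma> p)\<bar>"
    using vertex_of_typeE[OF assms(1)] assms(3) by metis
  with base_vertex_nonzero[OF assms(2)] assms(3) show ?thesis
    by (metis abs_eq_0 permutes_in_image)
qed

lemma vertex_of_type_last_coordinates:
  assumes "vertex_of_type n n v" "n \<noteq> 2" "p \<in> {1..n}" "q \<in> {1..n}" "p \<noteq> q"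
  shows "v p = 0 \<or> v q = 0"
proof -
  obtain \<sigma> where \<sigma>: "\<sigma> permutes {1..n}"
    and abs_v: "\<And>p. p \<in> {1..n} \<Longrightarrow> \<bar>v p\<bar> = \<bar>base_vertex n n (\<sigma> p)\<bar>"
    using vertex_of_typeE[OF assms(1)] by metis
  have "\<sigma> p \<noteq> \<sigma> q" using assms(3-5) permutes_inj[OF \<sigma>] by (auto dest: injD)
  then show ?thesis
    using base_vertex_last_nonzero[OF assms(2)] abs_v assms(3,4) permutes_in_image[OF \<sigma>]
    by (metis abs_0_eq)
qed

lemma two_levels_sum:
  fixes L P Q :: real
  assumes L: "0 < L" and P: "\<bar>P\<bar> = 0 \<or> \<bar>P\<bar> = sqrt 2 * L"
    and Q: "\<bar>Q\<bar> = 0 \<or> \<bar>Q\<bar> = sqrt 2 * L" and pos: "0 < P + Q"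
  shows "(P + Q) / sqrt 2 \<in> {L, 2 * L}"
    and "P = 0 \<or> Q = 0 \<Longrightarrow> (P + Q) / sqrt 2 = L"
    and "P \<noteq> 0 \<Longrightarrow> Q \<noteq> 0 \<Longrightarrow> (P + Q) / sqrt 2 = 2 * L"
proof -
  have "P + Q = sqrt 2 * L \<or> P + Q = 2 * (sqrt 2 * L)"
    and "P = 0 \<or> Q = 0 \<Longrightarrow> P + Q = sqrt 2 * L"
    and "P \<noteq> 0 \<Longrightarrow> Q \<noteq> 0 \<Longrightarrow> P + Q = 2 * (sqrt 2 * L)"
    using P Q pos L by (auto simp: abs_if split: if_splits)
  then show "(P + Q) / sqrt 2 \<in> {L, 2 * L}"
    and "P = 0 \<or> Q = 0 \<Longrightarrow> (P + Q) / sqrt 2 = L"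
    and "P \<noteq> 0 \<Longrightarrow> Q \<noteq> 0 \<Longrightarrow> (P + Q) / sqrt 2 = 2 * L"
    by auto
qed

lemma sin_sdist_set_root_boundary:
  assumes "3 \<le> n" "root_center n c" "v \<in> hemisphere n c"
  shows "sin (sdist_set n v (great_sphere n c)) = ip n v c"
  using assms sin_sdist_set_great_sphere root_center_in_sph great_sphere_root_center_nonempty
  by (simp add: hemisphere_def)

theorem lemma2p14:
  fixes n i :: nat and c v :: "nat \<Rightarrow> real" and \<alpha> :: "(nat \<Rightarrow> real) set"
  assumes "n \<ge> 4"
    and "root_center n c" and "\<alpha> = hemisphere n c"
    and "vertex_of_type n i v"
    and "v \<in> \<alpha> - great_sphere n c"
  shows "sin (sdist_set n v (great_sphere n c)) \<in> {lam n i, 2 * lam n i}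
       \<and> (i = n \<longrightarrow> sin (sdist_set n v (great_sphere n c)) = lam n n)
       \<and> (i \<in> {1, 2} \<longrightarrow> sin (sdist_set n v (great_sphere n c)) = 2 * lam n 1
                        \<and> 2 * lam n 1 = 2 * lam n 2)"
proof -
  obtain j k a b where jk: "j \<in> {1..n}" "k \<in> {1..n}" "j \<noteq> k" and ab: "\<bar>a\<bar> = 1" "\<bar>b\<bar> = 1"
    and ip_c: "ip n v c = (a * v j + b * v k) / sqrt 2"
    using root_centerE[OF assms(2)] by metis
  define P Q where "P = a * v j" and "Q = b * v k"
  have sin_eq: "sin (sdist_set n v (great_sphere n c)) = (P + Q) / sqrt 2"
    using sin_sdist_set_root_boundary assms by (simp add: ip_c P_def Q_def)
  have "0 < ip n v c" using assms(3,5) by (auto simp: hemisphere_def great_sphere_def)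
  then have pos: "0 < P + Q" by (simp add: ip_c P_def Q_def zero_less_divide_iff)
  have "\<bar>P\<bar> = \<bar>v j\<bar>" "\<bar>Q\<bar> = \<bar>v k\<bar>" using ab by (simp_all add: P_def Q_def abs_mult)
  then have levels: "\<bar>P\<bar> = 0 \<or> \<bar>P\<bar> = sqrt 2 * lam n i" "\<bar>Q\<bar> = 0 \<or> \<bar>Q\<bar> = sqrt 2 * lam n i"
    using vertex_coordinate_cases[OF assms(4)] jk by simp_all
  have "i \<in> {1..n}" using assms(4) by (simp add: vertex_of_type_def)
  note sum = two_levels_sum[OF lam_pos[OF this] levels pos]
  have "i = n \<Longrightarrow> P = 0 \<or> Q = 0"
    using vertex_of_type_last_coordinates[of n v j k] assms(1,4) jk by (auto simp: P_def Q_def)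
  moreover have "i \<in> {1, 2} \<Longrightarrow> P \<noteq> 0 \<and> Q \<noteq> 0"
    using vertex_coordinate_nonzero[OF assms(4)] jk ab by (auto simp: P_def Q_def)
  moreover have "lam n 1 = lam n 2" by (simp add: lam_def)
  ultimately show ?thesis
    unfolding sin_eq using sum by (auto simp del: One_nat_def)
qed

end
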